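(* Let $X\subset\mathbb{R}^n$ be bounded, let $X_I, X_U\subset X$ with $X_I\cap X_U=\emptyset$. Let $f\colon X\to\mathbb{R}^n$ define the dynamics $x(k+1)=f(x(k))$ (assumed to have unique solutions). Fix $T\in\mathbb{N}_+$ and let $\Xi$ be the set of all trajectories $\xi=\{x(k)\}_{k=0}^T$ consistent with these dynamics and with $x(0)\in X_I$. Let $V\colon\mathbb{R}^n\to\mathbb{R}$ be continuous and suppose that (i) $V(x)\le 0$ for all $x\in X_I$; (ii) $V(x)>0$ for all $x\in X_U$; (iii) for every trajectory $\xi=\{x(k)\}_{k=0}^T\in\Xi$, $$V(x(k+1))-V(x(k))<\frac1T\Big(\inf_{x\in X_U}V(x)-\sup_{x\in X_I}V(x)\Big),\qquad k=0,\dots,T-1.$$ Then $V$ is a safety (barrier) certificate: for every $\xi\in\Xi$ and every $k\in\{0,\dots,T\}$, $x(k)\notin X_U$.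
   Context: Trajectories are finite sequences of states generated by the deterministic discrete-time dynamics from an initial state in $X_I$. *)

theory Defs
  imports "HOL-Analysis.Analysis"
begin

text \<open>A trajectory is represented as a function on nat; only indices 0..T matter.\<close>
definition trajectories ::
  "('a \<Rightarrow> 'a) \<Rightarrow> 'a set \<Rightarrow> 'a set \<Rightarrow> nat \<Rightarrow> (nat \<Rightarrow> 'a) set" where
  "trajectories f X XI T =
     {\<xi>. \<xi> 0 \<in> XI \<and> (\<forall>k\<le>T. \<xi> k \<in> X) \<and> (\<forall>k<T. \<xi> (Suc k) = f (\<xi> k))}"

end

theory Submission
  imports Defs
begin

text \<open>Put \<open>D = Inf (V ` XU) - Sup (V ` XI)\<close>. A trajectory leaving \<open>XI\<close> and hitting
  \<open>XU\<close> at a time \<open>0 < k \<le> T\<close> must increase \<open>V\<close> by at least \<open>D\<close>, and also by more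
  than \<open>0\<close> (since \<open>V \<le> 0\<close> on \<open>XI\<close> and \<open>V > 0\<close> on \<open>XU\<close>), so by at least \<open>max 0 D\<close>.
  Summing the decrease condition over the first \<open>k\<close> steps shows that it increases
  by less than \<open>(k / T) * D \<le> max 0 D\<close>. Boundedness of \<open>X\<close> and continuity of \<open>V\<close>
  only serve to make the infimum and supremum meaningful.\<close>

lemma telescope_less:
  fixes g :: "nat \<Rightarrow> 'a::{ordered_cancel_comm_monoid_add, ring_1}"
  assumes "0 < k" and "\<And>j. j < k \<Longrightarrow> g (Suc j) - g j < c"
  shows "g k - g 0 < of_nat k * c"
proof -
  have "g k - g 0 = (\<Sum>j<k. g (Suc j) - g j)"
    by (rule sum_lessThan_telescope [symmetric])
  also have "\<dots> < of_nat (card {..<k}) * c"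
    using assms by (intro sum_bounded_above_strict) auto
  finally show ?thesis by simp
qed

lemma bounded_continuous_image:
  fixes V :: "'a::heine_borel \<Rightarrow> 'b::metric_space"
  assumes "bounded S" and "continuous_on (closure S) V"
  shows "bounded (V ` S)"
proof -
  have "compact (V ` closure S)"
    using assms by (intro compact_continuous_image) (auto simp: compact_closure)
  then show ?thesis
    by (rule bounded_closure_image [OF compact_imp_bounded])
qed

lemma barrier_certificate_avoids_unsafe:
  fixes V :: "'a \<Rightarrow> real"
  assumes "k \<le> T" and "\<xi> 0 \<in> XI"
    and "bdd_above (V ` XI)" and "bdd_below (V ` XU)"
    and "\<And>x. x \<in> XI \<Longrightarrow> V x \<le> 0"
    and "\<And>x. x \<in> XU \<Longrightarrow> V x > 0"
    and "\<And>j. j < T \<Longrightarrow>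
           V (\<xi> (Suc j)) - V (\<xi> j) < (1 / real T) * (Inf (V ` XU) - Sup (V ` XI))"
  shows "\<xi> k \<notin> XU"
proof
  assume unsafe: "\<xi> k \<in> XU"
  define D where "D = Inf (V ` XU) - Sup (V ` XI)"
  have "k \<noteq> 0"
    using assms(2,5,6) unsafe by (metis not_less)
  then have "V (\<xi> k) - V (\<xi> 0) < real k * ((1 / real T) * D)"
    using assms(1,7) unfolding D_def by (intro telescope_less) auto
  also have "\<dots> = (real k / real T) * D"
    by simp
  also have "\<dots> \<le> max 0 D"
  proof -
    have "0 \<le> real k / real T" and "real k / real T \<le> 1"
      using \<open>k \<noteq> 0\<close> assms(1) by auto
    then show ?thesis
      by (metis linorder_linear max.coboundedI1 max.coboundedI2
          mult_left_le_one_le mult_nonneg_nonpos)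
  qed
  also have "max 0 D \<le> V (\<xi> k) - V (\<xi> 0)"
  proof -
    have "Inf (V ` XU) \<le> V (\<xi> k)" and "V (\<xi> 0) \<le> Sup (V ` XI)"
      using assms(2-4) unsafe by (auto intro: cInf_lower cSup_upper)
    then show ?thesis
      using assms(2,5,6) unsafe unfolding D_def by force
  qed
  finally show False by simp
qed

theorem proposition2:
  fixes X XI XU :: "(real ^ 'n) set"
    and f :: "real ^ 'n \<Rightarrow> real ^ 'n"
    and V :: "real ^ 'n \<Rightarrow> real"
    and T :: nat
  assumes "bounded X"
    and "XI \<subseteq> X" and "XU \<subseteq> X" and "XI \<inter> XU = {}"
    and "T > 0"
    and "continuous_on UNIV V"
    and "\<And>x. x \<in> XI \<Longrightarrow> V x \<le> 0"
    and "\<And>x. x \<in> XU \<Longrightarrow> V x > 0"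
    and "\<And>\<xi> k. \<xi> \<in> trajectories f X XI T \<Longrightarrow> k < T \<Longrightarrow>
           V (\<xi> (Suc k)) - V (\<xi> k) < (1 / real T) * (Inf (V ` XU) - Sup (V ` XI))"
  shows "\<forall>\<xi> \<in> trajectories f X XI T. \<forall>k\<le>T. \<xi> k \<notin> XU"
proof (intro ballI allI impI)
  fix \<xi> k
  assume traj: "\<xi> \<in> trajectories f X XI T" and "k \<le> T"
  have "bounded (V ` X)"
    using assms(1,6) by (intro bounded_continuous_image) (auto intro: continuous_on_subset)
  then have "bdd_above (V ` XI)" and "bdd_below (V ` XU)"
    using assms(2,3)
    by (meson bounded_imp_bdd_above bounded_imp_bdd_below bounded_subset image_mono)+
  moreover have "\<xi> 0 \<in> XI"
    using traj by (simp add: trajectories_def)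
  ultimately show "\<xi> k \<notin> XU"
    using \<open>k \<le> T\<close> assms(7,8) assms(9)[OF traj]
    by (intro barrier_certificate_avoids_unsafe[where \<xi> = \<xi> and V = V])
qed

end
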